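(* The following set $\mathcal B_1$ of elements of $\hat{G}_{\Lambda,\Lambda_F}$ is linearly independent: (1) all $\bar\Xi^{\lambda_1}_{\lambda_2}\otimes f^{\dot I}_{\dot J}\otimes\Xi^{\lambda_3}_{\lambda_4}$ with $\lambda_1+\lambda_2>2$ and $\lambda_3+\lambda_4>2$; (2) all $\bar\Xi^{\lambda_1}_{\lambda_2}\otimes l^{\dot I}_{\dot J}$; (3) all $r^{\dot I}_{\dot J}\otimes\Xi^{\lambda_1}_{\lambda_2}$ with $\lambda_1\ne1$ or $\lambda_2\ne1$; (4) $\sigma^{\emptyset}_{\emptyset}$, all $\sigma^{I}_{\emptyset}$ and all $\sigma^{\emptyset}_{J}$; (5) all $\sigma^{I}_{J}$ such that the first integers of $I$ and $J$ are not simultaneously $1$. Here $\dot I,\dot J$ range over all sequences, $I,J$ over non-empty sequences, and the $\lambda_i$ over $\{1,\dots,\Lambda_F\}$.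
   Context: Fix positive integers $\Lambda,\Lambda_F$. A sequence $\dot I=i_1\cdots i_a$ is a finite, possibly empty, sequence of integers in $\{1,\dots,\Lambda\}$; $\emptyset$ is the empty sequence, undotted letters $I,J$ denote non-empty sequences, juxtaposition denotes concatenation, and $\delta^{\dot I}_{\dot J}$ is $1$ if $\dot I=\dot J$ and $0$ otherwise (similarly for integers). Let $\mathcal{T}_o$ be the complex vector space with basis the symbols $\bar\phi^{\lambda_1}\otimes s^{\dot K}\otimes\phi^{\lambda_2}$, $1\le\lambda_1,\lambda_2\le\Lambda_F$, $\dot K$ any sequence. For all sequences $\dot I,\dot J$ and all $\lambda_i\in\{1,\dots,\Lambda_F\}$ define linear operators on $\mathcal{T}_o$ (each written as a single symbol): first kind: $\bar\Xi^{\lambda_1}_{\lambda_2}\otimes f^{\dot I}_{\dot J}\otimes\Xi^{\lambda_3}_{\lambda_4}(\bar\phi^{\lambda_5}\otimes s^{\dot K}\otimes\phi^{\lambda_6})=\delta^{\lambda_5}_{\lambda_2}\delta^{\dot K}_{\dot J}\delta^{\lambda_6}_{\lambda_4}\,\bar\phi^{\lambda_1}\otimes s^{\dot I}\otimes\phi^{\lambda_3}$; second kind: $\bar\Xi^{\lambda_1}_{\lambda_2}\otimes l^{\dot I}_{\dot J}(\bar\phi^{\lambda_3}\otimes s^{\dot K}\otimes\phi^{\lambda_4})=\delta^{\lambda_3}_{\lambda_2}\sum_{\dot K_1\dot K_2=\dot K}\delta^{\dot K_1}_{\dot J}\,\bar\phi^{\lambda_1}\otimes s^{\dot I\dot K_2}\otimes\phi^{\lambda_4}$;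 third kind: $r^{\dot I}_{\dot J}\otimes\Xi^{\lambda_1}_{\lambda_2}(\bar\phi^{\lambda_3}\otimes s^{\dot K}\otimes\phi^{\lambda_4})=\delta^{\lambda_4}_{\lambda_2}\sum_{\dot K_1\dot K_2=\dot K}\delta^{\dot K_2}_{\dot J}\,\bar\phi^{\lambda_3}\otimes s^{\dot K_1\dot I}\otimes\phi^{\lambda_1}$; fourth kind: $\sigma^{\dot I}_{\dot J}(\bar\phi^{\lambda_1}\otimes s^{\dot K}\otimes\phi^{\lambda_2})=\sum_{\dot K_1\dot K_2\dot K_3=\dot K}\delta^{\dot K_2}_{\dot J}\,\bar\phi^{\lambda_1}\otimes s^{\dot K_1\dot I\dot K_3}\otimes\phi^{\lambda_2}$; sums run over all ways to write $\dot K$ as a concatenation of possibly empty sequences. The open string algebra $\hat{G}_{\Lambda,\Lambda_F}$ is the complex Lie algebra (commutator bracket) of operators on $\mathcal{T}_o$ spanned by all operators of these four kinds. *)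

theory Defs
  imports Complex_Main
begin

text \<open>Basis symbols phibar^a (x) s^K (x) phi^b of T_o are triples (a, K, b). A linear operator on T_o is determined by its
  values on the basis; we represent the value on a basis element x as the coefficient
  function y \<mapsto> (coefficient of basis element y), i.e. an operator is
  op :: basis \<Rightarrow> basis \<Rightarrow> complex.\<close>

type_synonym basis = "nat \<times> nat list \<times> nat"

datatype gen =
    GF nat nat "nat list" "nat list" nat nat   \<comment> \<open>Xibar^{l1}_{l2} (x) f^I_J (x) Xi^{l3}_{l4}\<close>
  | GL nat nat "nat list" "nat list"           \<comment> \<open>Xibar^{l1}_{l2} (x) l^I_J\<close>
  | GR "nat list" "nat list" nat nat           \<comment> \<open>r^I_J (x) Xi^{l1}_{l2}\<close>
  | GS "nat list" "nat list"

text \<open>act g x y = coefficient of basis element y in (operator g applied to basis element x).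
  Sums run over all decompositions K = K1 K2 (resp. K1 K2 K3), written via take/drop.\<close>
fun act :: "gen \<Rightarrow> basis \<Rightarrow> basis \<Rightarrow> complex" where
  "act (GF l1 l2 I J l3 l4) (a, K, b) y =
     (if a = l2 \<and> K = J \<and> b = l4 \<and> y = (l1, I, l3) then 1 else 0)"
| "act (GL l1 l2 I J) (a, K, b) y =
     (if a = l2 then (\<Sum>i\<in>{0..length K}.
         if take i K = J \<and> y = (l1, I @ drop i K, b) then 1 else 0) else 0)"
| "act (GR I J l1 l2) (a, K, b) y =
     (if b = l2 then (\<Sum>i\<in>{0..length K}.
         if drop i K = J \<and> y = (a, take i K @ I, l1) then 1 else 0) else 0)"
| "act (GS I J) (a, K, b) y =
     (\<Sum>(i, j)\<in>{(i, j). i \<le> j \<and> j \<le> length K}.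
         if take (j - i) (drop i K) = J \<and> y = (a, take i K @ I @ drop j K, b) then 1 else 0)"

definition valid_seq :: "nat \<Rightarrow> nat list \<Rightarrow> bool" where
  "valid_seq \<Lambda> K \<longleftrightarrow> set K \<subseteq> {1..\<Lambda>}"

definition valid_lam :: "nat \<Rightarrow> nat \<Rightarrow> bool" where
  "valid_lam \<Lambda>F l \<longleftrightarrow> l \<in> {1..\<Lambda>F}"

definition valid_basis :: "nat \<Rightarrow> nat \<Rightarrow> basis \<Rightarrow> bool" where
  "valid_basis \<Lambda> \<Lambda>F x \<longleftrightarrow>
     (case x of (a, K, b) \<Rightarrow> valid_lam \<Lambda>F a \<and> valid_seq \<Lambda> K \<and> valid_lam \<Lambda>F b)"

definition B1 :: "nat \<Rightarrow> nat \<Rightarrow> gen set" where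
  "B1 \<Lambda> \<Lambda>F =
     {GF l1 l2 I J l3 l4 | l1 l2 I J l3 l4.
        valid_lam \<Lambda>F l1 \<and> valid_lam \<Lambda>F l2 \<and> valid_lam \<Lambda>F l3 \<and> valid_lam \<Lambda>F l4 \<and>
        valid_seq \<Lambda> I \<and> valid_seq \<Lambda> J \<and> l1 + l2 > 2 \<and> l3 + l4 > 2}
   \<union> {GL l1 l2 I J | l1 l2 I J.
        valid_lam \<Lambda>F l1 \<and> valid_lam \<Lambda>F l2 \<and> valid_seq \<Lambda> I \<and> valid_seq \<Lambda> J}
   \<union> {GR I J l1 l2 | I J l1 l2.
        valid_lam \<Lambda>F l1 \<and> valid_lam \<Lambda>F l2 \<and> valid_seq \<Lambda> I \<and> valid_seq \<Lambda> J \<and>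
        (l1 \<noteq> 1 \<or> l2 \<noteq> 1)}
   \<union> {GS [] []}
   \<union> {GS I [] | I. I \<noteq> [] \<and> valid_seq \<Lambda> I}
   \<union> {GS [] J | J. J \<noteq> [] \<and> valid_seq \<Lambda> J}
   \<union> {GS I J | I J. I \<noteq> [] \<and> J \<noteq> [] \<and> valid_seq \<Lambda> I \<and> valid_seq \<Lambda> J \<and>
        \<not> (hd I = 1 \<and> hd J = 1)}"

end

(*
  Work with matrix entries between basis vectors phibar^a (x) s^K (x) phi^b. On the sector
  b = b' = 1 the elements (1) and (3) of B_1 vanish, and subtracting from an operator its entry
  between tl K and tl K' (when hd K = hd K') turns sigma^I_J into l^I_J and l^I_J into
  l^I_J - sum_h l^(hI)_(hJ). The l^I_J are linearly independent, their matrix being triangular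
  with respect to the length of J. So the coefficients alpha of the l's and beta of the sigma's
  satisfy alpha(P,Q) - alpha(tl P, tl Q) + beta(P,Q) = 0 whenever hd P = hd Q. Since
  sigma^(1P)_(1Q) is not in B_1, alpha is invariant under prefixing 1 to both words, so it
  vanishes by finite support, and then so does beta. On the sector a = a' = 1 only the r's are
  left, and reversing words turns them into l's. Finally the f's are read off single entries.
*)
theory Submission
  imports Defs
begin

declare act.simps [simp del]

lemma sum_of_bool_unique:
  assumes "finite A" and "\<And>x y. x \<in> A \<Longrightarrow> y \<in> A \<Longrightarrow> P x \<Longrightarrow> P y \<Longrightarrow> x = y"
  shows "(\<Sum>x\<in>A. of_bool (P x)) = (of_bool (\<exists>x\<in>A. P x) :: 'a::semiring_1)"
proof (cases "\<exists>x\<in>A. P x")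
  case True
  then obtain x where "x \<in> A" "P x" by blast
  then have "A \<inter> {x. P x} = {x}" using assms(2) by blast
  then show ?thesis using assms(1) True by simp
next
  case False
  then have "A \<inter> {x. P x} = {}" by blast
  then show ?thesis using assms(1) False by simp
qed

lemma sum_ordered_pairs_Suc:
  fixes n :: nat
  shows "(\<Sum>(i, j)\<in>{(i, j). i \<le> j \<and> j \<le> Suc n}. F i j)
     = (\<Sum>j\<in>{0..Suc n}. F 0 j) + (\<Sum>(i, j)\<in>{(i, j). i \<le> j \<and> j \<le> n}. F (Suc i) (Suc j))"
proof -
  have nested: "(\<Sum>(i, j)\<in>{(i, j). i \<le> j \<and> j \<le> m}. G i j) = (\<Sum>i\<le>m. \<Sum>j\<in>{i..m}. G i j)"
    for m :: nat and G :: "nat \<Rightarrow> nat \<Rightarrow> 'a"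
  proof -
    have "{(i, j). i \<le> j \<and> j \<le> m} = (SIGMA i:{..m}. {i..m})" by auto
    then show ?thesis by (simp add: sum.Sigma)
  qed
  show ?thesis unfolding nested sum.atMost_Suc_shift sum.shift_bounds_cl_Suc_ivl ..
qed

lemma ex_prefix_split_iff:
  "(\<exists>i\<in>{0..length K}. take i K = J \<and> K' = I @ drop i K) \<longleftrightarrow> (\<exists>R. K = J @ R \<and> K' = I @ R)"
proof
  assume "\<exists>i\<in>{0..length K}. take i K = J \<and> K' = I @ drop i K"
  then show "\<exists>R. K = J @ R \<and> K' = I @ R" by (metis append_take_drop_id)
next
  assume "\<exists>R. K = J @ R \<and> K' = I @ R"
  then obtain R where "K = J @ R" "K' = I @ R" by blast
  then show "\<exists>i\<in>{0..length K}. take i K = J \<and> K' = I @ drop i K"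
    by (intro bexI[of _ "length J"]) auto
qed

lemma ex_suffix_split_iff:
  "(\<exists>i\<in>{0..length K}. drop i K = J \<and> K' = take i K @ I) \<longleftrightarrow> (\<exists>R. K = R @ J \<and> K' = R @ I)"
proof
  assume "\<exists>i\<in>{0..length K}. drop i K = J \<and> K' = take i K @ I"
  then show "\<exists>R. K = R @ J \<and> K' = R @ I" by (metis append_take_drop_id)
next
  assume "\<exists>R. K = R @ J \<and> K' = R @ I"
  then obtain R where "K = R @ J" "K' = R @ I" by blast
  then show "\<exists>i\<in>{0..length K}. drop i K = J \<and> K' = take i K @ I"
    by (intro bexI[of _ "length R"]) auto
qed

(* The coefficient of s^K' in l^I_J s^K. *)
definition l_entry :: "nat list \<Rightarrow> nat list \<Rightarrow> nat list \<Rightarrow> nat list \<Rightarrow> complex" where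
  "l_entry I J K K' = of_bool (\<exists>R. K = J @ R \<and> K' = I @ R)"

lemma l_entry_rev:
  "l_entry (rev I) (rev J) (rev K) (rev K') = of_bool (\<exists>R. K = R @ J \<and> K' = R @ I)"
proof -
  have "(\<exists>R. rev K = rev J @ R \<and> rev K' = rev I @ R) \<longleftrightarrow> (\<exists>R. K = R @ J \<and> K' = R @ I)"
    by (metis rev_append rev_rev_ident)
  then show ?thesis by (simp add: l_entry_def)
qed

lemma act_GF:
  "act (GF l1 l2 I J l3 l4) (a, K, b) y = of_bool (a = l2 \<and> K = J \<and> b = l4 \<and> y = (l1, I, l3))"
  by (simp add: act.simps)

lemma act_GL:
  "act (GL l1 l2 I J) (a, K, b) (a', K', b') = of_bool (a = l2 \<and> a' = l1 \<and> b' = b) * l_entry I J K K'"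
proof -
  have "(\<Sum>i\<in>{0..length K}. if take i K = J \<and> (a', K', b') = (l1, I @ drop i K, b) then 1 else 0)
     = (of_bool (\<exists>i\<in>{0..length K}. take i K = J \<and> (a', K', b') = (l1, I @ drop i K, b)) :: complex)"
    unfolding of_bool_def[symmetric]
    by (rule sum_of_bool_unique) (simp_all, metis length_take min.absorb2)
  also have "\<dots> = of_bool (a' = l1 \<and> b' = b) * l_entry I J K K'"
    using ex_prefix_split_iff[of K J K' I] by (simp add: l_entry_def of_bool_conj[symmetric]) blast
  finally show ?thesis by (simp add: act.simps of_bool_conj)
qed

lemma act_GR:
  "act (GR I J l1 l2) (a, K, b) (a', K', b') =
     of_bool (b = l2 \<and> b' = l1 \<and> a' = a) * l_entry (rev I) (rev J) (rev K) (rev K')"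
proof -
  have "(\<Sum>i\<in>{0..length K}. if drop i K = J \<and> (a', K', b') = (a, take i K @ I, l1) then 1 else 0)
     = (of_bool (\<exists>i\<in>{0..length K}. drop i K = J \<and> (a', K', b') = (a, take i K @ I, l1)) :: complex)"
    unfolding of_bool_def[symmetric]
    by (rule sum_of_bool_unique) (simp_all, metis length_drop diff_diff_cancel)
  also have "\<dots> = of_bool (a' = a \<and> b' = l1) * l_entry (rev I) (rev J) (rev K) (rev K')"
    using ex_suffix_split_iff[of K J K' I] by (simp add: l_entry_rev of_bool_conj[symmetric]) blast
  finally show ?thesis by (simp add: act.simps of_bool_conj)
qed

lemma act_GS_peel:
  "act (GS I J) (a, K, b) (a', K', b') =
     of_bool (a' = a \<and> b' = b) * l_entry I J K K'
     + of_bool (K \<noteq> [] \<and> K' \<noteq> [] \<and> hd K = hd K') * act (GS I J) (a, tl K, b) (a', tl K', b')"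
proof (cases K)
  case Nil
  have "{(i, j). i \<le> j \<and> j \<le> (0::nat)} = {(0, 0)}" by auto
  then show ?thesis using Nil act_GL[of a a I J a "[]" b a' K' b'] by (simp add: act.simps)
next
  case (Cons k K0)
  let ?F = "\<lambda>i j. if take (j - i) (drop i K) = J \<and> (a', K', b') = (a, take i K @ I @ drop j K, b) then 1 else (0::complex)"
  have "act (GS I J) (a, K, b) (a', K', b') = (\<Sum>(i, j)\<in>{(i, j). i \<le> j \<and> j \<le> length K}. ?F i j)"
    by (simp add: act.simps)
  also have "\<dots> = (\<Sum>j\<in>{0..length K}. ?F 0 j)
      + (\<Sum>(i, j)\<in>{(i, j). i \<le> j \<and> j \<le> length K0}. ?F (Suc i) (Suc j))"
    using Cons sum_ordered_pairs_Suc[of ?F "length K0"] by simp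
  also have "(\<Sum>j\<in>{0..length K}. ?F 0 j) = of_bool (a' = a \<and> b' = b) * l_entry I J K K'"
    using act_GL[of a a I J a K b a' K' b'] by (simp add: act.simps)
  also have "(\<Sum>(i, j)\<in>{(i, j). i \<le> j \<and> j \<le> length K0}. ?F (Suc i) (Suc j))
     = of_bool (K' \<noteq> [] \<and> hd K' = k) * act (GS I J) (a, K0, b) (a', tl K', b')"
  proof -
    have "?F (Suc i) (Suc j) = of_bool (K' \<noteq> [] \<and> hd K' = k) *
        (if take (j - i) (drop i K0) = J \<and> (a', tl K', b') = (a, take i K0 @ I @ drop j K0, b) then 1 else 0)"
      for i j using Cons by (cases K') auto
    then show ?thesis by (simp add: act.simps sum_distrib_left case_prod_beta)
  qed
  finally show ?thesis using Cons by simp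
qed

(* The coefficient of s^K' in (sum_(I,J) f (I, J) l^I_J) s^K: the summands are the splittings
   K = J R, K' = I R, indexed by i = |J| and j = |I|. *)
definition l_comb :: "(nat list \<times> nat list \<Rightarrow> complex) \<Rightarrow> nat list \<Rightarrow> nat list \<Rightarrow> complex" where
  "l_comb f K K' =
     (\<Sum>i\<le>length K. \<Sum>j\<le>length K'. of_bool (drop i K = drop j K') * f (take j K', take i K))"

lemma l_comb_sum:
  "l_comb (\<lambda>p. \<Sum>g\<in>S. c g * e g p) K K' = (\<Sum>g\<in>S. c g * l_comb (e g) K K')"
  unfolding l_comb_def sum_distrib_left
  by (subst sum.swap, rule sum.cong, simp, subst sum.swap) (simp add: algebra_simps)

lemma l_comb_zero [simp]: "l_comb (\<lambda>_. 0) K K' = 0"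
  by (simp add: l_comb_def)

lemma l_comb_scale: "l_comb (\<lambda>p. x * f p) K K' = x * l_comb f K K'"
  unfolding l_comb_def sum_distrib_left by (intro sum.cong refl) (simp only: mult.left_commute)

lemma l_comb_diff: "l_comb (\<lambda>p. f p - h p) K K' = l_comb f K K' - l_comb h K K'"
  by (simp add: l_comb_def sum_subtractf algebra_simps)

lemma l_comb_indicator:
  assumes "\<And>I J I' J'. (I, J) \<in> A \<Longrightarrow> (I', J') \<in> A \<Longrightarrow> length I = length I' \<and> length J = length J'"
  shows "l_comb (\<lambda>p. of_bool (p \<in> A)) K K' = of_bool (\<exists>(I, J)\<in>A. \<exists>R. K = J @ R \<and> K' = I @ R)"
proof -
  let ?split = "\<lambda>(i, j). drop i K = drop j K' \<and> (take j K', take i K) \<in> A"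
  have "l_comb (\<lambda>p. of_bool (p \<in> A)) K K' = (\<Sum>ij\<in>{..length K} \<times> {..length K'}. of_bool (?split ij))"
    unfolding l_comb_def sum.cartesian_product
    by (rule sum.cong) (auto simp: of_bool_conj)
  also have "\<dots> = of_bool (\<exists>ij\<in>{..length K} \<times> {..length K'}. ?split ij)"
  proof (rule sum_of_bool_unique)
    fix ij ij' assume "ij \<in> {..length K} \<times> {..length K'}" "ij' \<in> {..length K} \<times> {..length K'}"
      and "?split ij" "?split ij'"
    then show "ij = ij'"
      using assms[of "take (snd ij) K'" "take (fst ij) K" "take (snd ij') K'" "take (fst ij') K"]
      by (auto simp: min_absorb2)
  qed simp
  also have "(\<exists>ij\<in>{..length K} \<times> {..length K'}. ?split ij)
      \<longleftrightarrow> (\<exists>(I, J)\<in>A. \<exists>R. K = J @ R \<and> K' = I @ R)"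
  proof
    assume "\<exists>ij\<in>{..length K} \<times> {..length K'}. ?split ij"
    then obtain i j where "drop i K = drop j K'" "(take j K', take i K) \<in> A" by auto
    then show "\<exists>(I, J)\<in>A. \<exists>R. K = J @ R \<and> K' = I @ R"
      by (intro bexI[of _ "(take j K', take i K)"]) (simp_all, metis append_take_drop_id)
  next
    assume "\<exists>(I, J)\<in>A. \<exists>R. K = J @ R \<and> K' = I @ R"
    then obtain I J R where "(I, J) \<in> A" "K = J @ R" "K' = I @ R" by blast
    then show "\<exists>ij\<in>{..length K} \<times> {..length K'}. ?split ij"
      by (intro bexI[of _ "(length J, length I)"]) auto
  qed
  finally show ?thesis .
qed

lemma l_comb_single:
  "l_comb (\<lambda>p. of_bool (p = (I, J))) K K' = l_entry I J K K'"
  using l_comb_indicator[of "{(I, J)}" K K'] by (simp add: l_entry_def)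

lemma l_comb_common_head:
  "l_comb (\<lambda>(P, Q). of_bool (P \<noteq> [] \<and> Q \<noteq> [] \<and> hd P = hd Q \<and> tl P = I \<and> tl Q = J)) K K'
     = of_bool (K \<noteq> [] \<and> K' \<noteq> [] \<and> hd K = hd K') * l_entry I J (tl K) (tl K')"
proof -
  let ?A = "range (\<lambda>h. (h # I, h # J))"
  have indicator: "(\<lambda>(P, Q). of_bool (P \<noteq> [] \<and> Q \<noteq> [] \<and> hd P = hd Q \<and> tl P = I \<and> tl Q = J))
      = (\<lambda>p. of_bool (p \<in> ?A))"
    by (auto simp: fun_eq_iff neq_Nil_conv)
  have "l_comb (\<lambda>p. of_bool (p \<in> ?A)) K K' = of_bool (\<exists>(P, Q)\<in>?A. \<exists>R. K = Q @ R \<and> K' = P @ R)"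
    by (rule l_comb_indicator) auto
  also have "\<dots> = of_bool (K \<noteq> [] \<and> K' \<noteq> [] \<and> hd K = hd K') * l_entry I J (tl K) (tl K')"
    by (cases K; cases K') (auto simp: l_entry_def)
  finally show ?thesis unfolding indicator .
qed

lemma l_comb_triangular:
  assumes "\<And>i P'. i < length Q \<Longrightarrow> f (P', take i Q) = 0"
  shows "l_comb f Q P = f (P, Q)"
proof -
  have "of_bool (drop i Q = drop j P) * f (take j P, take i Q) = of_bool (i = length Q \<and> j = length P) * f (P, Q)"
    if "i \<le> length Q" "j \<le> length P" for i j
    using that assms[of i] by (cases "i < length Q") auto
  then have "l_comb f Q P = (\<Sum>i\<le>length Q. \<Sum>j\<le>length P. of_bool (i = length Q \<and> j = length P) * f (P, Q))"
    unfolding l_comb_def by (intro sum.cong) auto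
  also have "\<dots> = f (P, Q)"
    by (simp add: of_bool_conj mult.assoc flip: sum_distrib_left)
  finally show ?thesis .
qed

lemma l_comb_eq_zero_imp_zero:
  assumes vanish: "\<And>K K'. valid_seq \<Lambda> K \<Longrightarrow> l_comb f K K' = 0" and "valid_seq \<Lambda> Q"
  shows "f (P, Q) = 0"
  using assms(2)
proof (induction Q arbitrary: P rule: length_induct)
  case (1 Q)
  have "f (P', take i Q) = 0" if "i < length Q" for P' i
  proof -
    have "length (take i Q) < length Q" "valid_seq \<Lambda> (take i Q)"
      using that 1(2) set_take_subset[of i Q] by (auto simp: valid_seq_def)
    then show ?thesis using 1(1) by blast
  qed
  then have "l_comb f Q P = f (P, Q)" by (rule l_comb_triangular)
  then show ?case using vanish 1(2) by simp
qed

lemma l_comb_independent: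
  assumes "\<And>K K'. valid_seq \<Lambda> K \<Longrightarrow> (\<Sum>g\<in>S. c g * l_comb (e g) K K') = 0" and "valid_seq \<Lambda> Q"
  shows "(\<Sum>g\<in>S. c g * e g (P, Q)) = 0"
  using l_comb_eq_zero_imp_zero[of \<Lambda> "\<lambda>p. \<Sum>g\<in>S. c g * e g p"] assms by (simp add: l_comb_sum)

(* The coefficients in the l^P_Q of g, restricted to the sector
   phibar^a (x) _ (x) phi^1 -> phibar^a' (x) _ (x) phi^1, with its shifted entries subtracted. *)
definition l_expansion :: "nat \<Rightarrow> nat \<Rightarrow> gen \<Rightarrow> nat list \<times> nat list \<Rightarrow> complex" where
  "l_expansion a a' g = (\<lambda>(P, Q).
      of_bool (g = GL a' a P Q)
    - of_bool (P \<noteq> [] \<and> Q \<noteq> [] \<and> hd P = hd Q \<and> g = GL a' a (tl P) (tl Q))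
    + of_bool (a' = a \<and> g = GS P Q))"

lemma act_sector_difference:
  assumes "g \<in> B1 \<Lambda> \<Lambda>F"
  shows "act g (a, K, 1) (a', K', 1)
           - of_bool (K \<noteq> [] \<and> K' \<noteq> [] \<and> hd K = hd K') * act g (a, tl K, 1) (a', tl K', 1)
         = l_comb (l_expansion a a' g) K K'"
proof (cases g)
  case (GF l1 l2 I J l3 l4)
  with assms have "l3 \<noteq> 1 \<or> l4 \<noteq> 1" by (auto simp: B1_def)
  then have "act g (a, L, 1) (a', L', 1) = 0" for L L' using GF by (auto simp: act_GF)
  then show ?thesis using GF by (simp add: l_expansion_def case_prod_unfold)
next
  case (GL l1 l2 I J)
  then have "l_expansion a a' g = (\<lambda>p. of_bool (l1 = a' \<and> l2 = a) * (of_bool (p = (I, J))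
      - (\<lambda>(P, Q). of_bool (P \<noteq> [] \<and> Q \<noteq> [] \<and> hd P = hd Q \<and> tl P = I \<and> tl Q = J)) p))"
    by (auto simp: l_expansion_def fun_eq_iff)
  then show ?thesis
    using GL by (simp add: act_GL l_comb_scale l_comb_diff l_comb_single l_comb_common_head algebra_simps)
next
  case (GR I J l1 l2)
  with assms have "l1 \<noteq> 1 \<or> l2 \<noteq> 1" by (auto simp: B1_def)
  then have "act g (a, L, 1) (a', L', 1) = 0" for L L' using GR by (auto simp: act_GR)
  then show ?thesis using GR by (simp add: l_expansion_def case_prod_unfold)
next
  case (GS I J)
  then have "l_expansion a a' g = (\<lambda>p. of_bool (a' = a) * of_bool (p = (I, J)))"
    by (auto simp: l_expansion_def fun_eq_iff)
  then show ?thesis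
    using GS act_GS_peel[of I J a K 1 a' K' 1] by (simp add: l_comb_scale l_comb_single)
qed

lemma vanishing_by_descent:
  fixes \<alpha> \<beta> :: "nat list \<Rightarrow> nat list \<Rightarrow> complex"
  assumes "0 < \<Lambda>"
    and rel: "\<And>P Q. valid_seq \<Lambda> Q \<Longrightarrow>
      \<alpha> P Q - of_bool (P \<noteq> [] \<and> Q \<noteq> [] \<and> hd P = hd Q) * \<alpha> (tl P) (tl Q) + \<beta> P Q = 0"
    and \<beta>_ones: "\<And>P Q. \<beta> (1 # P) (1 # Q) = 0"
    and finite_support: "finite {(P, Q). \<alpha> P Q \<noteq> 0}"
    and Q: "valid_seq \<Lambda> Q"
  shows "\<alpha> P Q = 0" and "\<beta> P Q = 0"
proof -
  have valid_ones: "valid_seq \<Lambda> (replicate n 1 @ Q)" if "valid_seq \<Lambda> Q" for n Q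
    using that \<open>0 < \<Lambda>\<close> by (auto simp: valid_seq_def)
  have shift: "\<alpha> (1 # P) (1 # Q) = \<alpha> P Q" if "valid_seq \<Lambda> Q" for P Q
    using rel[OF valid_ones[OF that, of 1], of "1 # P"] \<beta>_ones[of P Q] by simp
  have shifts: "\<alpha> (replicate n 1 @ P) (replicate n 1 @ Q) = \<alpha> P Q" if "valid_seq \<Lambda> Q" for n P Q
  proof (induction n)
    case (Suc n)
    then show ?case using shift[OF valid_ones[OF that, of n], of "replicate n 1 @ P"] by simp
  qed simp
  have \<alpha>_zero: "\<alpha> P Q = 0" if "valid_seq \<Lambda> Q" for P Q
  proof -
    let ?pad = "\<lambda>n. (replicate n (1::nat) @ P, replicate n 1 @ Q)"
    have "inj ?pad" by (auto intro!: injI dest: arg_cong[where f = "\<lambda>p. length (fst p)"])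
    then have "\<not> range ?pad \<subseteq> {(P, Q). \<alpha> P Q \<noteq> 0}"
      using finite_support finite_subset infinite_UNIV_nat finite_imageD by blast
    then obtain n where "\<alpha> (replicate n 1 @ P) (replicate n 1 @ Q) = 0" by auto
    then show ?thesis using shifts[OF that] by simp
  qed
  show "\<alpha> P Q = 0" using \<alpha>_zero[OF Q] .
  have "valid_seq \<Lambda> (tl Q)" using Q by (cases Q) (auto simp: valid_seq_def)
  then show "\<beta> P Q = 0" using rel[OF Q, of P] \<alpha>_zero Q by simp
qed

locale vanishing_combination =
  fixes \<Lambda> \<Lambda>F :: nat and S :: "gen set" and c :: "gen \<Rightarrow> complex"
  assumes \<Lambda>_pos: "0 < \<Lambda>" and \<Lambda>F_pos: "0 < \<Lambda>F"
    and finite_S: "finite S" and S_B1: "S \<subseteq> B1 \<Lambda> \<Lambda>F"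
    and vanishes: "\<And>x y. valid_basis \<Lambda> \<Lambda>F x \<Longrightarrow> (\<Sum>g\<in>S. c g * act g x y) = 0"
begin

definition coeff :: "gen \<Rightarrow> complex" where
  "coeff g = of_bool (g \<in> S) * c g"

lemma valid_lam_one: "valid_lam \<Lambda>F 1"
  using \<Lambda>F_pos by (simp add: valid_lam_def)

lemma sum_mult_of_bool_eq_coeff: "(\<Sum>g\<in>S. c g * of_bool (g = h)) = coeff h"
proof -
  have "S \<inter> {g. g = h} = (if h \<in> S then {h} else {})" by auto
  then show ?thesis using finite_S by (simp add: coeff_def)
qed

lemma sector_relation:
  assumes a: "valid_lam \<Lambda>F a" and a': "valid_lam \<Lambda>F a'" and Q: "valid_seq \<Lambda> Q"
  shows "coeff (GL a' a P Q) - of_bool (P \<noteq> [] \<and> Q \<noteq> [] \<and> hd P = hd Q) * coeff (GL a' a (tl P) (tl Q))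
           + of_bool (a' = a) * coeff (GS P Q) = 0"
proof -
  have "(\<Sum>g\<in>S. c g * l_comb (l_expansion a a' g) K K') = 0" if K: "valid_seq \<Lambda> K" for K K'
  proof -
    have "valid_seq \<Lambda> (tl K)" using K by (cases K) (auto simp: valid_seq_def)
    then have "valid_basis \<Lambda> \<Lambda>F (a, K, 1)" "valid_basis \<Lambda> \<Lambda>F (a, tl K, 1)"
      using a K valid_lam_one by (simp_all add: valid_basis_def)
    moreover have "(\<Sum>g\<in>S. c g * l_comb (l_expansion a a' g) K K')
        = (\<Sum>g\<in>S. c g * act g (a, K, 1) (a', K', 1))
          - of_bool (K \<noteq> [] \<and> K' \<noteq> [] \<and> hd K = hd K') * (\<Sum>g\<in>S. c g * act g (a, tl K, 1) (a', tl K', 1))"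
    proof -
      have "c g * l_comb (l_expansion a a' g) K K' = c g * act g (a, K, 1) (a', K', 1)
          - of_bool (K \<noteq> [] \<and> K' \<noteq> [] \<and> hd K = hd K') * (c g * act g (a, tl K, 1) (a', tl K', 1))"
        if "g \<in> S" for g
        using that S_B1 act_sector_difference[of g \<Lambda> \<Lambda>F a K a' K'] by (auto simp: algebra_simps)
      then show ?thesis by (simp add: sum_subtractf sum_distrib_left)
    qed
    ultimately show ?thesis using vanishes by simp
  qed
  then have "(\<Sum>g\<in>S. c g * l_expansion a a' g (P, Q)) = 0" using Q by (rule l_comb_independent)
  moreover have "c g * l_expansion a a' g (P, Q) = c g * of_bool (g = GL a' a P Q)
      - of_bool (P \<noteq> [] \<and> Q \<noteq> [] \<and> hd P = hd Q) * (c g * of_bool (g = GL a' a (tl P) (tl Q)))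
      + of_bool (a' = a) * (c g * of_bool (g = GS P Q))" for g
    by (simp add: l_expansion_def of_bool_conj algebra_simps)
  ultimately show ?thesis
    by (simp only: sum.distrib sum_subtractf sum_mult_of_bool_eq_coeff flip: sum_distrib_left)
qed

lemma coeff_GL_GS_zero:
  assumes "valid_lam \<Lambda>F a" and "valid_lam \<Lambda>F a'" and "valid_seq \<Lambda> Q"
  shows "coeff (GL a' a P Q) = 0" and "a' = a \<Longrightarrow> coeff (GS P Q) = 0"
proof -
  let ?\<alpha> = "\<lambda>P Q. coeff (GL a' a P Q)" and ?\<beta> = "\<lambda>P Q. of_bool (a' = a) * coeff (GS P Q)"
  have "{(P, Q). ?\<alpha> P Q \<noteq> 0} \<subseteq> (\<lambda>(P, Q). GL a' a P Q) -` S"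
    by (auto simp: coeff_def)
  moreover have "finite ((\<lambda>(P, Q). GL a' a P Q) -` S)"
    using finite_S by (rule finite_vimageI) (auto simp: inj_def)
  ultimately have finite_support: "finite {(P, Q). ?\<alpha> P Q \<noteq> 0}" by (rule finite_subset)
  have \<beta>_ones: "?\<beta> (1 # P) (1 # Q) = 0" for P Q
  proof -
    have "GS (1 # P) (1 # Q) \<notin> B1 \<Lambda> \<Lambda>F" by (simp add: B1_def)
    then show ?thesis using S_B1 by (auto simp: coeff_def)
  qed
  note descent = vanishing_by_descent[where \<alpha> = ?\<alpha> and \<beta> = ?\<beta>,
      OF \<Lambda>_pos sector_relation[OF assms(1,2)] \<beta>_ones finite_support assms(3)]
  show "?\<alpha> P Q = 0" and "a' = a \<Longrightarrow> coeff (GS P Q) = 0"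
    using descent by simp_all
qed

lemma c_GL_zero:
  assumes "GL l1 l2 I J \<in> S"
  shows "c (GL l1 l2 I J) = 0"
proof -
  have "valid_lam \<Lambda>F l1" "valid_lam \<Lambda>F l2" "valid_seq \<Lambda> J"
    using assms S_B1 by (auto simp: B1_def)
  then show ?thesis using coeff_GL_GS_zero(1)[of l2 l1 J I] assms by (simp add: coeff_def)
qed

lemma c_GS_zero:
  assumes "GS I J \<in> S"
  shows "c (GS I J) = 0"
proof -
  have "valid_seq \<Lambda> J" using assms S_B1 by (auto simp: B1_def valid_seq_def)
  then show ?thesis
    using coeff_GL_GS_zero(2)[OF valid_lam_one valid_lam_one] assms by (simp add: coeff_def)
qed

lemma c_GR_zero:
  assumes "GR I J l1 l2 \<in> S"
  shows "c (GR I J l1 l2) = 0"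
proof -
  have l1: "valid_lam \<Lambda>F l1" and l2: "valid_lam \<Lambda>F l2" and J: "valid_seq \<Lambda> J"
    using assms S_B1 by (auto simp: B1_def)
  (* With the GL and GS coefficients gone, only the r's act on phibar^1 (x) _ (x) phi^l2 ->
     phibar^1 (x) _ (x) phi^l1, and reversing words turns r^I_J into l^(rev I)_(rev J). *)
  define e :: "gen \<Rightarrow> nat list \<times> nat list \<Rightarrow> complex"
    where "e g = (\<lambda>(P, Q). of_bool (g = GR (rev P) (rev Q) l1 l2))" for g
  have by_generator: "c g * act g (1, rev K, l2) (1, rev K', l1) = c g * l_comb (e g) K K'"
    if "g \<in> S" for g K K'
  proof (cases g)
    case (GF m1 m2 I' J' m3 m4)
    with that S_B1 have "m1 \<noteq> 1 \<or> m2 \<noteq> 1" by (auto simp: B1_def)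
    then show ?thesis using GF by (auto simp: act_GF e_def case_prod_unfold)
  next
    case (GL m1 m2 I' J')
    then show ?thesis using that c_GL_zero by simp
  next
    case (GR I' J' m1 m2)
    then have "e g = (\<lambda>p. of_bool (m1 = l1 \<and> m2 = l2) * of_bool (p = (rev I', rev J')))"
      by (auto simp: e_def fun_eq_iff)
    then show ?thesis using GR by (auto simp: act_GR l_comb_scale l_comb_single)
  next
    case (GS I' J')
    then show ?thesis using that c_GS_zero by simp
  qed
  have "(\<Sum>g\<in>S. c g * l_comb (e g) K K') = 0" if "valid_seq \<Lambda> K" for K K'
  proof -
    have "valid_basis \<Lambda> \<Lambda>F (1, rev K, l2)" using that valid_lam_one l2 by (simp add: valid_basis_def valid_seq_def)
    then have "(\<Sum>g\<in>S. c g * act g (1, rev K, l2) (1, rev K', l1)) = 0" by (rule vanishes)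
    moreover have "(\<Sum>g\<in>S. c g * act g (1, rev K, l2) (1, rev K', l1)) = (\<Sum>g\<in>S. c g * l_comb (e g) K K')"
      by (rule sum.cong[OF refl]) (rule by_generator)
    ultimately show ?thesis by simp
  qed
  moreover have "valid_seq \<Lambda> (rev J)" using J by (simp add: valid_seq_def)
  ultimately have "(\<Sum>g\<in>S. c g * e g (rev I, rev J)) = 0" by (rule l_comb_independent)
  then show ?thesis using assms by (simp add: e_def sum_mult_of_bool_eq_coeff coeff_def)
qed

lemma c_GF_zero:
  assumes "GF l1 l2 I J l3 l4 \<in> S"
  shows "c (GF l1 l2 I J l3 l4) = 0"
proof -
  have "valid_basis \<Lambda> \<Lambda>F (l2, J, l4)" using assms S_B1 by (auto simp: B1_def valid_basis_def)
  then have "(\<Sum>g\<in>S. c g * act g (l2, J, l4) (l1, I, l3)) = 0" by (rule vanishes)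
  moreover have "c g * act g (l2, J, l4) (l1, I, l3) = c g * of_bool (g = GF l1 l2 I J l3 l4)"
    if "g \<in> S" for g
    using that c_GL_zero c_GR_zero c_GS_zero by (cases g) (auto simp: act_GF)
  ultimately have "(\<Sum>g\<in>S. c g * of_bool (g = GF l1 l2 I J l3 l4)) = 0"
    by (simp cong: sum.cong)
  then show ?thesis using assms by (simp add: sum_mult_of_bool_eq_coeff coeff_def)
qed

end

theorem lemma3:
  fixes \<Lambda> \<Lambda>F :: nat and S :: "gen set" and c :: "gen \<Rightarrow> complex"
  assumes "\<Lambda> > 0" and "\<Lambda>F > 0"
    and "finite S" and "S \<subseteq> B1 \<Lambda> \<Lambda>F"
    and "\<forall>x. valid_basis \<Lambda> \<Lambda>F x \<longrightarrow> (\<forall>y. (\<Sum>g\<in>S. c g * act g x y) = 0)"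
  shows "\<forall>g\<in>S. c g = 0"
proof
  interpret vanishing_combination \<Lambda> \<Lambda>F S c
    using assms by unfold_locales auto
  fix g assume "g \<in> S"
  then show "c g = 0"
    by (cases g) (auto intro: c_GF_zero c_GL_zero c_GR_zero c_GS_zero)
qed

end
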